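(* Let $b \ge 1$, $g = 4b^2$, and let $G$ be a gadget of type I or of type II (basic or extended) with designated vertices $p,q$. Then: (1) $G$ contains a $(2,b)$-alternating-path $R_0$ with $s_1(R_0)=t_1(R_0)=p$ and $t_2(R_0)=q$; (2) $\{p,q\}$ is reachable by a directed path inside $G$ from every vertex of $G$.
   Context: Fix an integer $b\ge1$ and set $g:=4b^2$. Each gadget has designated vertices $p,q$ with an arc $(p,q)$. A gadget of type I is a directed cycle of length at least $g$ through the arc $(p,q)$. A basic gadget of type II is a digraph consisting of vertices $p,q,r$ and a directed path $P_1$ from $r$ to $p$ of length at least $2b^2+b-2$ with $q\notin V(P_1)$, such that every vertex of $P_1$ has an arc to $q$. An extended gadget of type II consists of a basic type-II gadget $(p,q,r,P_1)$ together with a directed path $P_2$ of length at least $b$ such that the last vertex of $P_2$ is $r$, $V(P_1)\cap V(P_2)=\{r\}$, $q\notin V(P_2)$, and either there is an arc from the first vertex of $P_2$ to the second vertex of $P_1$, or there is an arc from some vertex of $V(P_1)\setminus\{r\}$ to the first vertex of $P_2$. For integers $a,b\ge1$, an $(a,b)$-alternating-path is an oriented path $R$ consisting of vertices $s_1,\dots,s_a,t_1,\dots,t_a$ and pairwise internally vertex-disjoint directed paths $Q_1,\dots,Q_a,Q'_1,\dots,Q'_{a-1}$, where $Q_i$ goes from $s_i$ to $t_i$ ($1\le i\le a$), $Q'_i$ goes from $s_{i+1}$ to $t_i$ ($1\le i\le a-1$), and $Q_2,\dots,Q_{a-1},Q'_1,\dots,Q'_{a-1}$ each have length at least $b$ ($Q_1$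 or $Q_a$ may have length zero). We write $s_i(R),t_i(R)$ for its vertices. *)

theory Defs
  imports Main
begin

text \<open>Digraphs are given by a vertex set V and an arc set E.
  Directed paths are nonempty lists of distinct vertices; the length of a
  path is the number of its arcs, i.e. length P - 1.\<close>

definition dpath :: "'a set \<Rightarrow> ('a \<times> 'a) set \<Rightarrow> 'a list \<Rightarrow> bool" where
  "dpath V E P \<longleftrightarrow> P \<noteq> [] \<and> distinct P \<and> set P \<subseteq> V \<and>
     (\<forall>i. i + 1 < length P \<longrightarrow> (P ! i, P ! (i + 1)) \<in> E)"

definition path_arcs :: "'a list \<Rightarrow> ('a \<times> 'a) set" where
  "path_arcs P = {(P ! i, P ! (i + 1)) | i. i + 1 < length P}"

definition cycle_arcs :: "'a list \<Rightarrow> ('a \<times> 'a) set" where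
  "cycle_arcs C = insert (last C, hd C) (path_arcs C)"

definition gadget_I :: "nat \<Rightarrow> 'a set \<Rightarrow> ('a \<times> 'a) set \<Rightarrow> 'a \<Rightarrow> 'a \<Rightarrow> bool" where
  "gadget_I b V E p q \<longleftrightarrow> (\<exists>C. distinct C \<and> length C \<ge> 4 * b^2 \<and>
      V = set C \<and> E = cycle_arcs C \<and> (p, q) \<in> E)"

definition gadget_II_basic_with ::
  "nat \<Rightarrow> 'a set \<Rightarrow> ('a \<times> 'a) set \<Rightarrow> 'a \<Rightarrow> 'a \<Rightarrow> 'a \<Rightarrow> 'a list \<Rightarrow> bool" where
  "gadget_II_basic_with b V E p q r P1 \<longleftrightarrow>
     P1 \<noteq> [] \<and> distinct P1 \<and> hd P1 = r \<and> last P1 = p \<and>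
     length P1 - 1 \<ge> 2 * b^2 + b - 2 \<and> q \<notin> set P1 \<and>
     V = insert q (set P1) \<and>
     E = path_arcs P1 \<union> {(v, q) | v. v \<in> set P1}"

definition gadget_II_basic :: "nat \<Rightarrow> 'a set \<Rightarrow> ('a \<times> 'a) set \<Rightarrow> 'a \<Rightarrow> 'a \<Rightarrow> bool" where
  "gadget_II_basic b V E p q \<longleftrightarrow> (\<exists>r P1. gadget_II_basic_with b V E p q r P1)"

definition gadget_II_ext :: "nat \<Rightarrow> 'a set \<Rightarrow> ('a \<times> 'a) set \<Rightarrow> 'a \<Rightarrow> 'a \<Rightarrow> bool" where
  "gadget_II_ext b V E p q \<longleftrightarrow> (\<exists>V0 E0 r P1 P2 F.
     gadget_II_basic_with b V0 E0 p q r P1 \<and>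
     P2 \<noteq> [] \<and> distinct P2 \<and> length P2 - 1 \<ge> b \<and> last P2 = r \<and>
     set P1 \<inter> set P2 = {r} \<and> q \<notin> set P2 \<and>
     F \<noteq> {} \<and>
     F \<subseteq> {(hd P2, P1 ! 1)} \<union> {(v, hd P2) | v. v \<in> set P1 - {r}} \<and>
     V = V0 \<union> set P2 \<and> E = E0 \<union> path_arcs P2 \<union> F)"

text \<open>The underlying oriented
  path is s1 Q1 t1 (Q'1 reversed) s2 Q2 t2 ... t_a; requiring its vertex sequence
  to be distinct expresses that it is an oriented path and that the directed
  paths are pairwise internally vertex-disjoint.\<close>
definition alt_walk :: "nat \<Rightarrow> (nat \<Rightarrow> 'a list) \<Rightarrow> (nat \<Rightarrow> 'a list) \<Rightarrow> 'a list" where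
  "alt_walk a Q Q' = Q 1 @ concat (map (\<lambda>i. tl (rev (Q' i)) @ tl (Q (i + 1))) [1..<a])"

definition alt_path ::
  "'a set \<Rightarrow> ('a \<times> 'a) set \<Rightarrow> nat \<Rightarrow> nat \<Rightarrow> (nat \<Rightarrow> 'a) \<Rightarrow> (nat \<Rightarrow> 'a)
     \<Rightarrow> (nat \<Rightarrow> 'a list) \<Rightarrow> (nat \<Rightarrow> 'a list) \<Rightarrow> bool" where
  "alt_path V E a b s t Q Q' \<longleftrightarrow> a \<ge> 1 \<and> b \<ge> 1 \<and>
     (\<forall>i \<in> {1..a}. dpath V E (Q i) \<and> hd (Q i) = s i \<and> last (Q i) = t i) \<and>
     (\<forall>i \<in> {1..<a}. dpath V E (Q' i) \<and> hd (Q' i) = s (i + 1) \<and> last (Q' i) = t i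
                     \<and> length (Q' i) - 1 \<ge> b) \<and>
     (\<forall>i \<in> {2..<a}. length (Q i) - 1 \<ge> b) \<and>
     distinct (alt_walk a Q Q')"

end

theory Submission
  imports Defs
begin

(* In every gadget the required R0 comes from a fork: a vertex s with a directed path of
   length at least b to p and a directed path to q, meeting only in s.  Reversing the
   first path behind the trivial path Q1 = [p] gives s1 = t1 = p, s2 = s and t2 = q.
   In a type-I cycle, dropping the arc (p,q) leaves a Hamiltonian path from q to p of
   length at least 4b^2 - 1 >= b; it serves as Q'1 with Q2 = [q], and every vertex reaches
   p along it.  In a type-II gadget, the last b arcs of P1 together with the arc from their
   first vertex to q form the fork; every vertex of P1 has an arc to q, and a vertex of P2
   follows P2 to r and then takes the arc (r,q). *)

lemma dpath_mono: "dpath V E P \<Longrightarrow> V \<subseteq> V' \<Longrightarrow> E \<subseteq> E' \<Longrightarrow> dpath V' E' P"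
  unfolding dpath_def by blast

lemma dpath_drop: "dpath V E P \<Longrightarrow> j < length P \<Longrightarrow> dpath V E (drop j P)"
  unfolding dpath_def by (auto dest: in_set_dropD simp: add.commute add.left_commute)

lemma dpath_snoc:
  assumes "dpath V E P" "x \<in> V" "x \<notin> set P" "(last P, x) \<in> E"
  shows "dpath V E (P @ [x])"
proof -
  have "i + 1 < length P \<or> i = length P - 1" if "i + 1 < length (P @ [x])" for i
    using that by auto
  then show ?thesis
    using assms unfolding dpath_def by (auto simp: nth_append last_conv_nth)
qed

lemma dpath_suffix_to_last:
  assumes "dpath V E P" "v \<in> set P"
  obtains P' where "dpath V E P'" "hd P' = v" "last P' = last P" "set P' \<subseteq> set P"
proof -
  obtain j where "j < length P" "P ! j = v"
    using assms(2) by (auto simp: in_set_conv_nth)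
  then show thesis
    using that[of "drop j P"] dpath_drop[OF assms(1)] set_drop_subset[of j P]
    by (simp add: hd_drop_conv_nth)
qed

definition reaches :: "'a set \<Rightarrow> ('a \<times> 'a) set \<Rightarrow> 'a \<Rightarrow> 'a \<Rightarrow> bool" where
  "reaches V E v w \<longleftrightarrow> (\<exists>P. dpath V E P \<and> hd P = v \<and> last P = w)"

lemma reaches_refl: "v \<in> V \<Longrightarrow> reaches V E v v"
  unfolding reaches_def dpath_def by (intro exI[of _ "[v]"]) simp

lemma reaches_arc: "(v, w) \<in> E \<Longrightarrow> v \<in> V \<Longrightarrow> w \<in> V \<Longrightarrow> v \<noteq> w \<Longrightarrow> reaches V E v w"
  unfolding reaches_def dpath_def by (intro exI[of _ "[v, w]"]) (simp add: less_Suc_eq)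

lemma reaches_mono: "reaches V E v w \<Longrightarrow> V \<subseteq> V' \<Longrightarrow> E \<subseteq> E' \<Longrightarrow> reaches V' E' v w"
  unfolding reaches_def using dpath_mono by blast

lemma alt_path_mono:
  "alt_path V E a b s t Q Q' \<Longrightarrow> V \<subseteq> V' \<Longrightarrow> E \<subseteq> E' \<Longrightarrow> alt_path V' E' a b s t Q Q'"
  unfolding alt_path_def using dpath_mono by blast

definition alt_path_R0 :: "'a set \<Rightarrow> ('a \<times> 'a) set \<Rightarrow> nat \<Rightarrow> 'a \<Rightarrow> 'a \<Rightarrow> bool" where
  "alt_path_R0 V E b p q \<longleftrightarrow>
     (\<exists>s t Q Q'. alt_path V E 2 b s t Q Q' \<and> s 1 = p \<and> t 1 = p \<and> t 2 = q)"

lemma alt_path_R0_mono: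
  "alt_path_R0 V E b p q \<Longrightarrow> V \<subseteq> V' \<Longrightarrow> E \<subseteq> E' \<Longrightarrow> alt_path_R0 V' E' b p q"
  unfolding alt_path_R0_def using alt_path_mono by metis

lemma alt_path_R0_from_fork:
  assumes "b \<ge> 1"
    and R: "dpath V E R" "last R = p" "length R - 1 \<ge> b"
    and "dpath V E Q" "hd Q = hd R" "last Q = q" "distinct (rev R @ tl Q)"
  shows "alt_path_R0 V E b p q"
proof -
  have "R \<noteq> []" "dpath V E [p]"
    using R unfolding dpath_def by auto
  then have walk: "[p] @ tl (rev R) = rev R"
    using R(2) by (metis append_Cons append_Nil hd_rev list.collapse rev_is_Nil_conv)
  define s where "s = (\<lambda>i::nat. if i = 1 then p else hd R)"
  define t where "t = (\<lambda>i::nat. if i = 1 then p else q)"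
  define Qs where "Qs = (\<lambda>i::nat. if i = 1 then [p] else Q)"
  have "alt_walk 2 Qs (\<lambda>_. R) = rev R @ tl Q"
    unfolding alt_walk_def Qs_def using walk by (simp add: numeral_2_eq_2)
  then have "alt_path V E 2 b s t Qs (\<lambda>_. R)"
    using assms \<open>dpath V E [p]\<close> unfolding alt_path_def s_def t_def Qs_def
    by auto
  then show ?thesis
    unfolding alt_path_R0_def s_def t_def by fastforce
qed

lemma cycle_arcs_conv_nth:
  assumes "C \<noteq> []"
  shows "cycle_arcs C = {(C ! i, C ! (Suc i mod length C)) | i. i < length C}"
proof -
  have wrap: "(last C, hd C) = (C ! (length C - 1), C ! (Suc (length C - 1) mod length C))"
    using assms by (simp add: last_conv_nth hd_conv_nth)
  have "Suc i < length C \<or> i = length C - 1" if "i < length C" for i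
    using that by linarith
  then show ?thesis
    unfolding cycle_arcs_def path_arcs_def using wrap assms by fastforce
qed

lemma path_arcs_rotate_subset: "path_arcs (rotate k C) \<subseteq> cycle_arcs C"
proof (cases "C = []")
  case False
  show ?thesis
  proof
    fix a assume "a \<in> path_arcs (rotate k C)"
    then obtain i where a: "a = (rotate k C ! i, rotate k C ! Suc i)" and i: "Suc i < length C"
      unfolding path_arcs_def by auto
    define j where "j = (k + i) mod length C"
    have "a = (C ! j, C ! (Suc j mod length C))"
      using a i unfolding j_def by (simp add: nth_rotate mod_Suc_eq)
    moreover have "j < length C" using False unfolding j_def by simp
    ultimately show "a \<in> cycle_arcs C"
      unfolding cycle_arcs_conv_nth[OF False] by blast
  qed
qed (simp add: path_arcs_def)

lemma hamiltonian_path_of_cycle_arc: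
  assumes "distinct C" "C \<noteq> []" "(p, q) \<in> cycle_arcs C"
  obtains D where "dpath (set C) (cycle_arcs C) D" "set D = set C" "length D = length C"
    "hd D = q" "last D = p"
proof -
  obtain i where i: "i < length C" "p = C ! i" "q = C ! (Suc i mod length C)"
    using assms(3) unfolding cycle_arcs_conv_nth[OF assms(2)] by blast
  define D where "D = rotate (Suc i) C"
  have "hd D = q"
    using i assms(2) unfolding D_def by (simp add: hd_conv_nth nth_rotate del: rotate_Suc)
  moreover have "last D = p"
  proof -
    have "last D = C ! ((Suc i + (length C - 1)) mod length C)"
      using assms(2) unfolding D_def by (simp add: last_conv_nth nth_rotate del: rotate_Suc)
    also have "Suc i + (length C - 1) = i + length C"
      using i(1) by simp
    finally show ?thesis using i by simp
  qed
  moreover have "dpath (set C) (cycle_arcs C) D"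
    using assms path_arcs_rotate_subset[of "Suc i" C] unfolding D_def dpath_def path_arcs_def
    by auto
  ultimately show thesis using that[of D] unfolding D_def by simp
qed

lemma gadget_I_hamiltonian_path:
  assumes "b \<ge> 1" "gadget_I b V E p q"
  obtains D where "dpath V E D" "set D = V" "length D \<ge> 4 * b^2" "hd D = q" "last D = p"
proof -
  obtain C where C: "distinct C" "length C \<ge> 4 * b^2" "V = set C" "E = cycle_arcs C"
    "(p, q) \<in> E"
    using assms(2) unfolding gadget_I_def by blast
  moreover have "C \<noteq> []"
    using C(2) assms(1) by auto
  ultimately show thesis
    using that by (metis hamiltonian_path_of_cycle_arc)
qed

lemma gadget_I_alt_path_R0:
  assumes "b \<ge> 1" "gadget_I b V E p q"
  shows "alt_path_R0 V E b p q"
proof -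
  obtain D where D: "dpath V E D" "length D \<ge> 4 * b^2" "hd D = q" "last D = p"
    using gadget_I_hamiltonian_path[OF assms] by metis
  have "b \<le> b^2"
    using assms(1) by (simp add: power2_eq_square)
  then have "length D - 1 \<ge> b"
    using D(2) assms(1) by linarith
  moreover have "dpath V E [q]"
    using D unfolding dpath_def by (auto dest: hd_in_set)
  ultimately show ?thesis
    using alt_path_R0_from_fork[OF assms(1) D(1,4), of "[q]" q] D(1,3) unfolding dpath_def
    by simp
qed

lemma gadget_I_reaches:
  assumes "b \<ge> 1" "gadget_I b V E p q" "v \<in> V"
  shows "reaches V E v p"
proof -
  obtain D where D: "dpath V E D" "set D = V" "last D = p"
    using gadget_I_hamiltonian_path[OF assms(1,2)] by metis
  then show ?thesis
    using dpath_suffix_to_last[OF D(1)] assms(3) unfolding reaches_def by metis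
qed

lemma gadget_II_basic_with_alt_path_R0:
  assumes "b \<ge> 1" "gadget_II_basic_with b V E p q r P1"
  shows "alt_path_R0 V E b p q"
proof -
  have P1: "P1 \<noteq> []" "distinct P1" "last P1 = p" "length P1 - 1 \<ge> 2 * b^2 + b - 2"
    "q \<notin> set P1" "V = insert q (set P1)" "E = path_arcs P1 \<union> {(v, q) | v. v \<in> set P1}"
    using assms(2) unfolding gadget_II_basic_with_def by auto
  have "b^2 \<ge> 1" using assms(1) by simp
  then have "length P1 - 1 \<ge> b" using P1(4) by linarith
  define R where "R = drop (length P1 - 1 - b) P1"
  have "dpath V E P1"
    using P1 unfolding dpath_def path_arcs_def by auto
  then have R: "dpath V E R" "last R = p" "length R - 1 \<ge> b"
    using P1 \<open>length P1 - 1 \<ge> b\<close> dpath_drop[of V E P1 "length P1 - 1 - b"]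
    unfolding R_def by auto
  have "hd R \<in> set P1"
    using R(1) unfolding R_def dpath_def by (metis hd_in_set in_set_dropD)
  then have "dpath V E [hd R, q]" "distinct (rev R @ tl [hd R, q])"
    using P1 unfolding R_def dpath_def by (auto simp: less_Suc_eq dest: in_set_dropD)
  then show ?thesis
    using alt_path_R0_from_fork[OF assms(1) R(1,2,3)] by simp
qed

lemma gadget_II_basic_with_reaches:
  assumes "gadget_II_basic_with b V E p q r P1" "v \<in> V"
  shows "reaches V E v q"
proof (cases "v = q")
  case True
  then show ?thesis using assms(2) by (simp add: reaches_refl)
next
  case False
  then show ?thesis
    using assms unfolding gadget_II_basic_with_def by (auto intro: reaches_arc)
qed

lemma gadget_II_ext_alt_path_R0:
  assumes "b \<ge> 1" "gadget_II_ext b V E p q"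
  shows "alt_path_R0 V E b p q"
proof -
  obtain V0 E0 r P1 where "gadget_II_basic_with b V0 E0 p q r P1" "V0 \<subseteq> V" "E0 \<subseteq> E"
    using assms(2) unfolding gadget_II_ext_def by blast
  then show ?thesis
    using gadget_II_basic_with_alt_path_R0[OF assms(1)] alt_path_R0_mono by metis
qed

lemma gadget_II_ext_reaches:
  assumes "gadget_II_ext b V E p q" "v \<in> V"
  shows "reaches V E v q"
proof -
  obtain V0 E0 r P1 P2 F where basic: "gadget_II_basic_with b V0 E0 p q r P1"
    and P2: "P2 \<noteq> []" "distinct P2" "last P2 = r" "q \<notin> set P2"
    and VE: "V = V0 \<union> set P2" "E = E0 \<union> path_arcs P2 \<union> F"
    using assms(1) unfolding gadget_II_ext_def by blast
  have P1: "r \<in> set P1" "V0 = insert q (set P1)" "E0 = path_arcs P1 \<union> {(v, q) | v. v \<in> set P1}"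
    using basic unfolding gadget_II_basic_with_def by (auto intro: hd_in_set)
  show ?thesis
  proof (cases "v \<in> V0")
    case True
    moreover have "V0 \<subseteq> V" "E0 \<subseteq> E" using VE by blast+
    ultimately show ?thesis
      using gadget_II_basic_with_reaches[OF basic] reaches_mono by metis
  next
    case False
    have "dpath V E P2"
      using P2(1,2) VE unfolding dpath_def path_arcs_def by blast
    moreover have "v \<in> set P2" using False assms(2) VE by blast
    ultimately obtain P where P: "dpath V E P" "hd P = v" "last P = last P2" "set P \<subseteq> set P2"
      by (rule dpath_suffix_to_last)
    have "(last P, q) \<in> E"
      using P(3) P1 P2(3) VE by blast
    moreover have "q \<notin> set P" "q \<in> V"
      using P(4) P1(2) P2(4) VE by auto
    ultimately have "dpath V E (P @ [q])"
      using P(1) by (intro dpath_snoc)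
    moreover have "hd (P @ [q]) = v"
      using P(1,2) unfolding dpath_def by simp
    ultimately show ?thesis
      unfolding reaches_def by (metis last_snoc)
  qed
qed

theorem lemma2p4:
  fixes b :: nat and V :: "'a set" and E :: "('a \<times> 'a) set" and p q :: 'a
  assumes "b \<ge> 1"
    and "gadget_I b V E p q \<or> gadget_II_basic b V E p q \<or> gadget_II_ext b V E p q"
  shows "(\<exists>s t Q Q'. alt_path V E 2 b s t Q Q' \<and> s 1 = p \<and> t 1 = p \<and> t 2 = q)
       \<and> (\<forall>v \<in> V. \<exists>w \<in> {p, q}. \<exists>P. dpath V E P \<and> hd P = v \<and> last P = w)"
proof -
  have "alt_path_R0 V E b p q \<and> (\<forall>v \<in> V. reaches V E v p \<or> reaches V E v q)"
    using assms(2)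
  proof (elim disjE)
    assume I: "gadget_I b V E p q"
    show ?thesis
      using gadget_I_alt_path_R0[OF assms(1) I] gadget_I_reaches[OF assms(1) I] by blast
  next
    assume "gadget_II_basic b V E p q"
    then obtain r P1 where basic: "gadget_II_basic_with b V E p q r P1"
      unfolding gadget_II_basic_def by blast
    show ?thesis
      using gadget_II_basic_with_alt_path_R0[OF assms(1) basic]
        gadget_II_basic_with_reaches[OF basic] by blast
  next
    assume ext: "gadget_II_ext b V E p q"
    show ?thesis
      using gadget_II_ext_alt_path_R0[OF assms(1) ext] gadget_II_ext_reaches[OF ext] by blast
  qed
  then show ?thesis
    unfolding alt_path_R0_def reaches_def by blast
qed

end
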